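(* For every integer $n\ge 8$, the disjunctive domination number of the torus grid graph $C_8\Box C_n$ satisfies $$n\le \gamma_2^d(C_8\Box C_n)\le\begin{cases} n+1, & n\equiv 1 \text{ or } 3\pmod 4,\\ n+2, & n\equiv 2\pmod 4.\end{cases}$$ Moreover, if $n\equiv 0\pmod 4$, then $\gamma_2^d(C_8\Box C_n)=n$.
   Context: $C_k$ denotes the cycle on $k$ vertices, and $G\Box H$ is the Cartesian product: vertex set $V(G)\times V(H)$, with $(g,h)\sim(g',h')$ iff either $g=g'$ and $hh'\in E(H)$, or $h=h'$ and $gg'\in E(G)$. For a simple graph $\Gamma$ and a vertex $v$, let $\Gamma(v)$ be the set of vertices at distance $1$ from $v$ and $\Gamma_2(v)$ the set of vertices at distance exactly $2$ from $v$. A set $S\subseteq V(\Gamma)$ is a disjunctive dominating set if every vertex $v\notin S$ satisfies $|\Gamma(v)\cap S|\ge 1$ or $|\Gamma_2(v)\cap S|\ge 2$. The disjunctive domination number $\gamma_2^d(\Gamma)$ is the minimum cardinality of a disjunctive dominating set of $\Gamma$. *)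

theory Defs
  imports Main
begin

text \<open>A simple graph is given by a vertex set V and a symmetric irreflexive
adjacency relation E (only its restriction to V matters).\<close>

inductive walk :: "('a \<Rightarrow> 'a \<Rightarrow> bool) \<Rightarrow> 'a set \<Rightarrow> 'a \<Rightarrow> 'a \<Rightarrow> nat \<Rightarrow> bool"
  for E V where
  walk0: "u \<in> V \<Longrightarrow> walk E V u u 0"
| walkS: "u \<in> V \<Longrightarrow> E u w \<Longrightarrow> walk E V w v k \<Longrightarrow> walk E V u v (Suc k)"

text \<open>Graph distance: length of a shortest walk (only meaningful when one exists).\<close>
definition gdist :: "('a \<Rightarrow> 'a \<Rightarrow> bool) \<Rightarrow> 'a set \<Rightarrow> 'a \<Rightarrow> 'a \<Rightarrow> nat" where
  "gdist E V u v = (LEAST k. walk E V u v k)"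

definition sphere :: "('a \<Rightarrow> 'a \<Rightarrow> bool) \<Rightarrow> 'a set \<Rightarrow> 'a \<Rightarrow> nat \<Rightarrow> 'a set" where
  "sphere E V v d = {u \<in> V. (\<exists>k. walk E V v u k) \<and> gdist E V v u = d}"

definition disj_dom_set :: "('a \<Rightarrow> 'a \<Rightarrow> bool) \<Rightarrow> 'a set \<Rightarrow> 'a set \<Rightarrow> bool" where
  "disj_dom_set E V S \<longleftrightarrow> S \<subseteq> V \<and>
     (\<forall>v \<in> V - S. card (sphere E V v 1 \<inter> S) \<ge> 1 \<or> card (sphere E V v 2 \<inter> S) \<ge> 2)"

definition disj_dom_num :: "('a \<Rightarrow> 'a \<Rightarrow> bool) \<Rightarrow> 'a set \<Rightarrow> nat" where
  "disj_dom_num E V = (LEAST k. \<exists>S. disj_dom_set E V S \<and> card S = k)"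

definition cycle_adj :: "nat \<Rightarrow> nat \<Rightarrow> nat \<Rightarrow> bool" where
  "cycle_adj k i j \<longleftrightarrow> i < k \<and> j < k \<and> (j = (i + 1) mod k \<or> i = (j + 1) mod k)"

definition cart_adj :: "('a \<Rightarrow> 'a \<Rightarrow> bool) \<Rightarrow> ('b \<Rightarrow> 'b \<Rightarrow> bool) \<Rightarrow> 'a \<times> 'b \<Rightarrow> 'a \<times> 'b \<Rightarrow> bool" where
  "cart_adj EG EH p q \<longleftrightarrow>
     (fst p = fst q \<and> EH (snd p) (snd q)) \<or> (snd p = snd q \<and> EG (fst p) (fst q))"

definition torus_adj :: "nat \<Rightarrow> nat \<Rightarrow> nat \<times> nat \<Rightarrow> nat \<times> nat \<Rightarrow> bool" where
  "torus_adj m n = cart_adj (cycle_adj m) (cycle_adj n)"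

definition torus_V :: "nat \<Rightarrow> nat \<Rightarrow> (nat \<times> nat) set" where
  "torus_V m n = {0..<m} \<times> {0..<n}"

end

theory Submission
  imports Defs
begin

(* Lower bound: let c_j be the number of vertices of S in column j. Every vertex v satisfies
   2 [v in S] + 2 |N(v) /\ S| + |N_2(v) /\ S| >= 2, and summing this over the 8 vertices of
   column j gives 16 <= 8 c_j + 4 (c_(j-1) + c_(j+1)) + c_(j-2) + c_(j+2).  These cyclic
   inequalities alone force c_0 + ... + c_(n-1) >= n: a potential on four consecutive column
   counts increases by at least 1 - c_(j+4) from each window to the next.

   Upper bound: repeating the columns {0,4}, {}, {2,6}, {} costs one vertex per column, and a
   prefix block of n mod 4 columns with at most two extra vertices adjusts the length.  Whether
   the vertices of a column are dominated depends only on the five columns around it, and every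
   such cyclic window of a block B followed by q >= 2 periods P already occurs in B P P, so
   finitely many windows are checked by evaluation. *)

section \<open>Spheres and the disjunctive domination number\<close>

lemma walk_0_iff: "walk E V u v 0 \<longleftrightarrow> u \<in> V \<and> u = v"
  by (auto elim: walk.cases intro: walk.intros)

lemma walk_Suc_iff: "walk E V u v (Suc k) \<longleftrightarrow> u \<in> V \<and> (\<exists>w. E u w \<and> walk E V w v k)"
  by (auto elim: walk.cases intro: walk.intros)

lemma walk_end_in_V: "walk E V u v k \<Longrightarrow> v \<in> V"
  by (induction rule: walk.induct) auto

lemma walk_2_iff: "walk E V u v 2 \<longleftrightarrow> u \<in> V \<and> v \<in> V \<and> (\<exists>w\<in>V. E u w \<and> E w v)"
  by (auto simp: numeral_2_eq_2 walk_Suc_iff walk_0_iff)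

lemma mem_sphere_iff: "u \<in> sphere E V v d \<longleftrightarrow> walk E V v u d \<and> (\<forall>k<d. \<not> walk E V v u k)"
proof
  assume "u \<in> sphere E V v d"
  then obtain k where "walk E V v u k" "gdist E V v u = d"
    by (auto simp: sphere_def)
  then show "walk E V v u d \<and> (\<forall>k<d. \<not> walk E V v u k)"
    unfolding gdist_def by (metis LeastI not_less_Least)
next
  assume "walk E V v u d \<and> (\<forall>k<d. \<not> walk E V v u k)"
  then have "gdist E V v u = d"
    unfolding gdist_def by (intro Least_equality) (auto simp: not_less[symmetric])
  with \<open>walk E V v u d \<and> _\<close> show "u \<in> sphere E V v d"
    by (auto simp: sphere_def intro: walk_end_in_V)
qed

lemma sphere_1_iff: "u \<in> sphere E V v 1 \<longleftrightarrow> v \<in> V \<and> u \<in> V \<and> E v u \<and> u \<noteq> v"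
  by (auto simp: mem_sphere_iff walk_Suc_iff walk_0_iff)

lemma sphere_2_iff:
  "u \<in> sphere E V v 2 \<longleftrightarrow> v \<in> V \<and> u \<in> V \<and> u \<noteq> v \<and> \<not> E v u \<and> (\<exists>w\<in>V. E v w \<and> E w u)"
  by (auto simp: mem_sphere_iff walk_2_iff walk_Suc_iff walk_0_iff less_2_cases_iff)

lemma disj_dom_num_le: "disj_dom_set E V S \<Longrightarrow> disj_dom_num E V \<le> card S"
  unfolding disj_dom_num_def by (rule Least_le) blast

lemma disj_dom_num_ge:
  assumes "disj_dom_set E V S\<^sub>0" and "\<And>S. disj_dom_set E V S \<Longrightarrow> k \<le> card S"
  shows "k \<le> disj_dom_num E V"
proof -
  have "\<exists>S. disj_dom_set E V S \<and> card S = disj_dom_num E V"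
    unfolding disj_dom_num_def by (rule LeastI_ex) (use assms(1) in blast)
  with assms(2) show ?thesis by metis
qed

section \<open>Cycles and tori\<close>

definition cyc_succ :: "nat \<Rightarrow> nat \<Rightarrow> nat" where
  "cyc_succ k i = (i + 1) mod k"

definition cyc_pred :: "nat \<Rightarrow> nat \<Rightarrow> nat" where
  "cyc_pred k i = (i + k - 1) mod k"

lemma cyc_succ_eq: "i < k \<Longrightarrow> cyc_succ k i = (if Suc i = k then 0 else Suc i)"
  by (auto simp: cyc_succ_def)

lemma cyc_pred_eq: "i < k \<Longrightarrow> cyc_pred k i = (if i = 0 then k - 1 else i - 1)"
  unfolding cyc_pred_def
  by (cases i) (simp_all add: add.commute[of _ k] add_Suc_right[symmetric] del: add_Suc_right)

lemma cyc_succ_lt: "i < k \<Longrightarrow> cyc_succ k i < k"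
  and cyc_pred_lt: "i < k \<Longrightarrow> cyc_pred k i < k"
  by (simp_all add: cyc_succ_def cyc_pred_def)

lemma cyc_succ_pred: "i < k \<Longrightarrow> cyc_succ k (cyc_pred k i) = i"
  and cyc_pred_succ: "i < k \<Longrightarrow> cyc_pred k (cyc_succ k i) = i"
  by (auto simp: cyc_succ_eq cyc_pred_eq)

lemma cyc_succ_mod: "cyc_succ k (i mod k) = (i + 1) mod k"
  by (simp add: cyc_succ_def mod_Suc_eq)

lemma cyc_pred_mod: "0 < k \<Longrightarrow> cyc_pred k ((i + 1) mod k) = i mod k"
  by (metis cyc_pred_succ cyc_succ_mod mod_less_divisor)

lemma cyc_window_indices:
  assumes "0 < n"
  shows "cyc_succ n ((s + 2) mod n) = (s + 3) mod n" "cyc_succ n ((s + 3) mod n) = (s + 4) mod n"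
    "cyc_pred n ((s + 2) mod n) = (s + 1) mod n" "cyc_pred n ((s + 1) mod n) = s mod n"
  using assms cyc_pred_mod[of n "s + 1"] cyc_pred_mod[of n s]
  by (simp_all add: cyc_succ_mod eval_nat_numeral)

lemma cycle_adj_iff: "i < k \<Longrightarrow> cycle_adj k i j \<longleftrightarrow> j = cyc_succ k i \<or> j = cyc_pred k i"
proof -
  assume "i < k"
  have "i = cyc_succ k j \<longleftrightarrow> j = cyc_pred k i" if "j < k"
    using that \<open>i < k\<close> cyc_succ_pred cyc_pred_succ by metis
  then show ?thesis
    using \<open>i < k\<close> cyc_succ_lt cyc_pred_lt unfolding cycle_adj_def cyc_succ_def by auto
qed

fun torus_nbrs :: "nat \<Rightarrow> nat \<Rightarrow> nat \<times> nat \<Rightarrow> (nat \<times> nat) list" where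
  "torus_nbrs m n (i, j) =
     [(cyc_succ m i, j), (cyc_pred m i, j), (i, cyc_succ n j), (i, cyc_pred n j)]"

fun torus_nbrs2 :: "nat \<Rightarrow> nat \<Rightarrow> nat \<times> nat \<Rightarrow> (nat \<times> nat) list" where
  "torus_nbrs2 m n (i, j) =
     [(cyc_succ m (cyc_succ m i), j), (cyc_pred m (cyc_pred m i), j),
      (i, cyc_succ n (cyc_succ n j)), (i, cyc_pred n (cyc_pred n j)),
      (cyc_succ m i, cyc_succ n j), (cyc_succ m i, cyc_pred n j),
      (cyc_pred m i, cyc_succ n j), (cyc_pred m i, cyc_pred n j)]"

lemma torus_adj_iff:
  "v \<in> torus_V m n \<Longrightarrow> torus_adj m n v u \<longleftrightarrow> u \<in> set (torus_nbrs m n v)"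
  by (cases v; cases u) (auto simp: torus_V_def torus_adj_def cart_adj_def cycle_adj_iff)

lemma torus_nbrs_subset: "v \<in> torus_V m n \<Longrightarrow> set (torus_nbrs m n v) \<subseteq> torus_V m n"
  by (cases v) (auto simp: torus_V_def cyc_succ_lt cyc_pred_lt)

lemma torus_nbrs_nbrs:
  assumes "(i, j) \<in> torus_V m n"
  shows "(\<Union>u\<in>set (torus_nbrs m n (i, j)). set (torus_nbrs m n u))
    = insert (i, j) (set (torus_nbrs2 m n (i, j)))"
  using assms by (auto simp: torus_V_def cyc_succ_pred cyc_pred_succ)

lemma distinct_cyc_ball:
  assumes "5 \<le> k" "i < k"
  shows "distinct [i, cyc_succ k i, cyc_pred k i, cyc_succ k (cyc_succ k i), cyc_pred k (cyc_pred k i)]"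
  using assms by (auto simp: cyc_succ_eq cyc_pred_eq cyc_succ_lt cyc_pred_lt)

lemma distinct_torus_ball:
  assumes "5 \<le> m" "5 \<le> n" "(i, j) \<in> torus_V m n"
  shows "distinct ((i, j) # torus_nbrs m n (i, j) @ torus_nbrs2 m n (i, j))"
  using distinct_cyc_ball[OF assms(1), of i] distinct_cyc_ball[OF assms(2), of j] assms(3)
  by (auto simp: torus_V_def)

lemma torus_sphere_1:
  assumes "5 \<le> m" "5 \<le> n" "(i, j) \<in> torus_V m n"
  shows "sphere (torus_adj m n) (torus_V m n) (i, j) 1 = set (torus_nbrs m n (i, j))"
proof -
  have "(i, j) \<notin> set (torus_nbrs m n (i, j))"
    using distinct_torus_ball[OF assms] unfolding distinct.simps(2) set_append by blast
  then show ?thesis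
    using assms(3) torus_nbrs_subset[OF assms(3)]
    unfolding set_eq_iff sphere_1_iff torus_adj_iff[OF assms(3)] by blast
qed

lemma torus_sphere_2:
  assumes "5 \<le> m" "5 \<le> n" "(i, j) \<in> torus_V m n"
  shows "sphere (torus_adj m n) (torus_V m n) (i, j) 2 = set (torus_nbrs2 m n (i, j))"
proof -
  let ?N = "set (torus_nbrs m n (i, j))" and ?N2 = "set (torus_nbrs2 m n (i, j))"
  have "(i, j) \<notin> ?N2" "?N \<inter> ?N2 = {}"
    using distinct_torus_ball[OF assms]
    unfolding distinct.simps(2) distinct_append set_append by blast+
  moreover have "?N2 \<subseteq> torus_V m n"
    using torus_nbrs_nbrs[OF assms(3)] torus_nbrs_subset[OF assms(3)] torus_nbrs_subset by blast
  moreover have "(\<exists>w\<in>torus_V m n. w \<in> ?N \<and> torus_adj m n w u) \<longleftrightarrow> u \<in> insert (i, j) ?N2"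
    for u
  proof -
    have "(\<exists>w\<in>torus_V m n. w \<in> ?N \<and> torus_adj m n w u) \<longleftrightarrow> (\<exists>w\<in>?N. u \<in> set (torus_nbrs m n w))"
      using torus_nbrs_subset[OF assms(3)] torus_adj_iff[of _ m n u] by blast
    then show ?thesis
      unfolding torus_nbrs_nbrs[OF assms(3), symmetric] by blast
  qed
  ultimately show ?thesis
    using assms(3) unfolding set_eq_iff sphere_2_iff torus_adj_iff[OF assms(3)] by blast
qed

definition hits :: "'a set \<Rightarrow> 'a list \<Rightarrow> nat" where
  "hits S xs = (\<Sum>x\<leftarrow>xs. of_bool (x \<in> S))"

lemma card_set_inter_eq_hits: "distinct xs \<Longrightarrow> card (set xs \<inter> S) = hits S xs"
  by (simp add: hits_def sum_list_distinct_conv_sum_set)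

lemma disj_dom_set_torus_iff:
  assumes "5 \<le> m" "5 \<le> n"
  shows "disj_dom_set (torus_adj m n) (torus_V m n) S \<longleftrightarrow> S \<subseteq> torus_V m n \<and>
    (\<forall>v \<in> torus_V m n - S. 1 \<le> hits S (torus_nbrs m n v) \<or> 2 \<le> hits S (torus_nbrs2 m n v))"
proof -
  have "card (sphere (torus_adj m n) (torus_V m n) v 1 \<inter> S) = hits S (torus_nbrs m n v)"
    "card (sphere (torus_adj m n) (torus_V m n) v 2 \<inter> S) = hits S (torus_nbrs2 m n v)"
    if v: "v \<in> torus_V m n" for v
  proof -
    obtain i j where [simp]: "v = (i, j)" by fastforce
    have "distinct (torus_nbrs m n (i, j))" "distinct (torus_nbrs2 m n (i, j))"
      using distinct_torus_ball[OF assms] v unfolding distinct.simps(2) distinct_append by auto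
    then show "card (sphere (torus_adj m n) (torus_V m n) v 1 \<inter> S) = hits S (torus_nbrs m n v)"
      "card (sphere (torus_adj m n) (torus_V m n) v 2 \<inter> S) = hits S (torus_nbrs2 m n v)"
      using v by (simp_all only: \<open>v = (i, j)\<close> torus_sphere_1[OF assms] torus_sphere_2[OF assms]
          card_set_inter_eq_hits)
  qed
  then show ?thesis
    unfolding disj_dom_set_def by (auto simp del: torus_nbrs.simps torus_nbrs2.simps)
qed

section \<open>The lower bound\<close>

lemma sum_periodic_shift:
  fixes f :: "nat \<Rightarrow> 'a::cancel_comm_monoid_add"
  assumes "\<And>i. f (i + m) = f i"
  shows "(\<Sum>i<m. f (i + k)) = (\<Sum>i<m. f i)"
proof (induction k)
  case (Suc k)
  have "(\<Sum>i<m. f (i + Suc k)) + f k = (\<Sum>i<Suc m. f (i + k))"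
    by (simp only: sum.lessThan_Suc_shift) (simp add: add.commute)
  also have "\<dots> = (\<Sum>i<m. f (i + k)) + f (m + k)"
    by simp
  also have "\<dots> = (\<Sum>i<m. f (i + k)) + f k"
    using assms[of k] by (simp add: add.commute)
  finally show ?case
    using Suc.IH by simp
qed simp

lemma sum_cyc_succ: "(\<Sum>i<m. f (cyc_succ m i)) = (\<Sum>i<m. f i)"
  and sum_cyc_pred: "(\<Sum>i<m. f (cyc_pred m i)) = (\<Sum>i<m. f i)"
  for f :: "nat \<Rightarrow> 'a::cancel_comm_monoid_add"
proof -
  have "(\<Sum>i<m. f ((i + k) mod m)) = (\<Sum>i<m. f i)" for k
    using sum_periodic_shift[of "\<lambda>i. f (i mod m)" m k] by simp
  from this[of 1] this[of "m - 1"] show "(\<Sum>i<m. f (cyc_succ m i)) = (\<Sum>i<m. f i)"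
    "(\<Sum>i<m. f (cyc_pred m i)) = (\<Sum>i<m. f i)"
    unfolding cyc_succ_def cyc_pred_def
    by (auto intro: sum.cong[OF refl] simp: Suc_diff_le[symmetric])
qed

definition column_count :: "(nat \<times> nat) set \<Rightarrow> nat \<Rightarrow> nat \<Rightarrow> nat" where
  "column_count S m j = (\<Sum>i<m. of_bool ((i, j) \<in> S))"

lemma column_count_le: "column_count S m j \<le> m"
proof -
  have "card ({..<m} \<inter> {i. (i, j) \<in> S}) \<le> card {..<m}"
    by (rule card_mono) auto
  then show ?thesis
    by (simp add: column_count_def)
qed

lemma torus_column_ineq:
  assumes dom: "disj_dom_set (torus_adj m n) (torus_V m n) S"
    and "5 \<le> m" "5 \<le> n" "j < n"
  defines "c \<equiv> column_count S m"
  shows "2 * m \<le> 8 * c j + 4 * (c (cyc_succ n j) + c (cyc_pred n j))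
    + c (cyc_succ n (cyc_succ n j)) + c (cyc_pred n (cyc_pred n j))"
proof -
  have local: "2 \<le> 2 * of_bool ((i, j) \<in> S) + 2 * hits S (torus_nbrs m n (i, j))
      + hits S (torus_nbrs2 m n (i, j))" if "i < m" for i
  proof (cases "(i, j) \<in> S")
    case False
    moreover have "(i, j) \<in> torus_V m n"
      using that \<open>j < n\<close> by (simp add: torus_V_def)
    ultimately have "1 \<le> hits S (torus_nbrs m n (i, j)) \<or> 2 \<le> hits S (torus_nbrs2 m n (i, j))"
      using dom unfolding disj_dom_set_torus_iff[OF \<open>5 \<le> m\<close> \<open>5 \<le> n\<close>] by blast
    then show ?thesis
      by linarith
  qed simp
  have rows: "(\<Sum>i<m. of_bool ((cyc_succ m i, j') \<in> S)) = c j'"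
    "(\<Sum>i<m. of_bool ((cyc_pred m i, j') \<in> S)) = c j'"
    "(\<Sum>i<m. of_bool ((cyc_succ m (cyc_succ m i), j') \<in> S)) = c j'"
    "(\<Sum>i<m. of_bool ((cyc_pred m (cyc_pred m i), j') \<in> S)) = c j'" for j'
    unfolding c_def column_count_def
    using sum_cyc_succ[of "\<lambda>i. of_bool ((i, j') \<in> S) :: nat" m]
      sum_cyc_pred[of "\<lambda>i. of_bool ((i, j') \<in> S) :: nat" m]
      sum_cyc_succ[of "\<lambda>i. of_bool ((cyc_succ m i, j') \<in> S) :: nat" m]
      sum_cyc_pred[of "\<lambda>i. of_bool ((cyc_pred m i, j') \<in> S) :: nat" m]
    by simp_all
  have "2 * m = (\<Sum>i<m. 2)"
    by simp
  also have "\<dots> \<le> (\<Sum>i<m. 2 * of_bool ((i, j) \<in> S) + 2 * hits S (torus_nbrs m n (i, j))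
      + hits S (torus_nbrs2 m n (i, j)))"
    by (intro sum_mono local) simp
  also have "\<dots> = 8 * c j + 4 * (c (cyc_succ n j) + c (cyc_pred n j))
    + c (cyc_succ n (cyc_succ n j)) + c (cyc_pred n (cyc_pred n j))"
    by (simp add: hits_def sum.distrib sum_distrib_left[symmetric] rows c_def[symmetric]
        column_count_def[symmetric])
  finally show ?thesis .
qed

lemma card_eq_sum_column_count:
  assumes "S \<subseteq> torus_V m n"
  shows "card S = (\<Sum>j<n. column_count S m j)"
proof -
  have "card S = (\<Sum>v\<in>torus_V m n. of_bool (v \<in> S))"
    using assms by (simp add: torus_V_def Int_absorb1)
  also have "\<dots> = (\<Sum>i<m. \<Sum>j<n. of_bool ((i, j) \<in> S))"
    unfolding torus_V_def atLeast0LessThan sum.cartesian_product by (simp only: split_def prod.collapse)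
  also have "\<dots> = (\<Sum>j<n. column_count S m j)"
    unfolding column_count_def by (rule sum.swap)
  finally show ?thesis .
qed

(* Up to a constant, the shortest-path potential of the graph whose vertices are windows of four
   column counts capped at 4, with an edge a b c d -> b c d e of weight e - 1 whenever a b c d e
   satisfies the column inequality.  uncap x is the largest count that is capped to x, so the
   inequality for true counts implies it for the uncapped caps. *)
definition potential_table :: "nat list list list list" where
  "potential_table =
     [[[[3, 3, 3, 3, 0], [3, 3, 1, 1, 0], [2, 1, 1, 1, 0], [2, 1, 1, 1, 0], [1, 1, 0, 0, 0]],
       [[3, 3, 3, 1, 0], [3, 2, 1, 1, 0], [2, 1, 1, 1, 0], [2, 1, 1, 1, 0], [1, 1, 0, 0, 0]],
       [[3, 3, 1, 1, 0], [2, 2, 1, 1, 0], [2, 1, 1, 1, 0], [2, 1, 1, 1, 0], [1, 1, 0, 0, 0]],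
       [[3, 2, 1, 1, 0], [2, 2, 1, 1, 0], [2, 1, 1, 1, 0], [2, 1, 1, 1, 0], [1, 1, 0, 0, 0]],
       [[2, 1, 1, 1, 0], [2, 1, 1, 1, 0], [1, 1, 1, 1, 0], [1, 1, 1, 1, 0], [1, 1, 0, 0, 0]]],
      [[[3, 3, 3, 3, 0], [3, 3, 1, 1, 0], [2, 1, 1, 1, 0], [2, 1, 1, 1, 0], [1, 1, 0, 0, 0]],
       [[3, 3, 3, 1, 0], [3, 2, 1, 1, 0], [2, 1, 1, 1, 0], [2, 1, 1, 1, 0], [1, 1, 0, 0, 0]],
       [[3, 3, 1, 1, 0], [2, 2, 1, 1, 0], [2, 1, 1, 1, 0], [2, 1, 1, 1, 0], [1, 1, 0, 0, 0]],
       [[3, 2, 1, 1, 0], [2, 2, 1, 1, 0], [2, 1, 1, 1, 0], [2, 1, 1, 1, 0], [1, 1, 0, 0, 0]],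
       [[2, 1, 1, 1, 0], [2, 1, 1, 1, 0], [1, 1, 1, 1, 0], [1, 1, 1, 1, 0], [1, 1, 0, 0, 0]]],
      [[[3, 3, 3, 2, 0], [3, 2, 1, 1, 0], [2, 1, 1, 1, 0], [2, 1, 1, 1, 0], [1, 1, 0, 0, 0]],
       [[3, 3, 2, 1, 0], [3, 2, 1, 1, 0], [2, 1, 1, 1, 0], [2, 1, 1, 1, 0], [1, 1, 0, 0, 0]],
       [[3, 2, 1, 1, 0], [2, 2, 1, 1, 0], [2, 1, 1, 1, 0], [2, 1, 1, 1, 0], [1, 1, 0, 0, 0]],
       [[3, 2, 1, 1, 0], [2, 2, 1, 1, 0], [2, 1, 1, 1, 0], [2, 1, 1, 1, 0], [1, 1, 0, 0, 0]],
       [[2, 1, 1, 1, 0], [2, 1, 1, 1, 0], [1, 1, 1, 1, 0], [1, 1, 1, 1, 0], [1, 1, 0, 0, 0]]],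
      [[[3, 3, 3, 1, 0], [3, 2, 1, 1, 0], [2, 1, 1, 1, 0], [2, 1, 1, 1, 0], [1, 1, 0, 0, 0]],
       [[3, 3, 1, 1, 0], [3, 2, 1, 1, 0], [2, 1, 1, 1, 0], [2, 1, 1, 1, 0], [1, 1, 0, 0, 0]],
       [[3, 2, 1, 1, 0], [2, 2, 1, 1, 0], [2, 1, 1, 1, 0], [2, 1, 1, 1, 0], [1, 1, 0, 0, 0]],
       [[3, 2, 1, 1, 0], [2, 2, 1, 1, 0], [2, 1, 1, 1, 0], [2, 1, 1, 1, 0], [1, 1, 0, 0, 0]],
       [[2, 1, 1, 1, 0], [2, 1, 1, 1, 0], [1, 1, 1, 1, 0], [1, 1, 1, 1, 0], [1, 1, 0, 0, 0]]],
      [[[3, 3, 1, 1, 0], [2, 2, 1, 1, 0], [2, 1, 1, 1, 0], [2, 1, 1, 1, 0], [1, 1, 0, 0, 0]],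
       [[3, 2, 1, 1, 0], [2, 2, 1, 1, 0], [2, 1, 1, 1, 0], [2, 1, 1, 1, 0], [1, 1, 0, 0, 0]],
       [[2, 2, 1, 1, 0], [2, 2, 1, 1, 0], [2, 1, 1, 1, 0], [2, 1, 1, 1, 0], [1, 1, 0, 0, 0]],
       [[2, 2, 1, 1, 0], [2, 2, 1, 1, 0], [2, 1, 1, 1, 0], [2, 1, 1, 1, 0], [1, 1, 0, 0, 0]],
       [[2, 1, 1, 1, 0], [2, 1, 1, 1, 0], [1, 1, 1, 1, 0], [1, 1, 1, 1, 0], [1, 1, 0, 0, 0]]]]"

definition window_potential :: "nat \<Rightarrow> nat \<Rightarrow> nat \<Rightarrow> nat \<Rightarrow> nat" where
  "window_potential a b c d = potential_table ! min a 4 ! min b 4 ! min c 4 ! min d 4"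

definition uncap :: "nat \<Rightarrow> nat" where
  "uncap x = (if x < 4 then x else 8)"

lemma window_potential_table_step:
  "\<forall>a\<in>set [0..<5]. \<forall>b\<in>set [0..<5]. \<forall>c\<in>set [0..<5]. \<forall>d\<in>set [0..<5]. \<forall>e\<in>set [0..<5].
     16 \<le> 8 * uncap c + 4 * (uncap b + uncap d) + uncap a + uncap e \<longrightarrow>
     window_potential a b c d + 1 \<le> e + window_potential b c d e"
  unfolding window_potential_def potential_table_def uncap_def by code_simp

lemma window_potential_step:
  assumes "a \<le> 8" "b \<le> 8" "c \<le> 8" "d \<le> 8" "e \<le> 8"
    and "16 \<le> 8 * c + 4 * (b + d) + a + e"
  shows "window_potential a b c d + 1 \<le> e + window_potential b c d e"
proof -
  have "x \<le> uncap (min x 4)" if "x \<le> 8" for x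
    using that by (simp add: uncap_def)
  with assms have "16 \<le> 8 * uncap (min c 4) + 4 * (uncap (min b 4) + uncap (min d 4))
      + uncap (min a 4) + uncap (min e 4)"
    by (smt (verit) add_mono mult_le_mono2 order_trans)
  then have "window_potential (min a 4) (min b 4) (min c 4) (min d 4) + 1
      \<le> min e 4 + window_potential (min b 4) (min c 4) (min d 4) (min e 4)"
    using window_potential_table_step by simp
  moreover have "min e 4 \<le> e"
    by simp
  ultimately show ?thesis
    unfolding window_potential_def by linarith
qed

lemma sum_ge_period_if_column_ineq:
  fixes c :: "nat \<Rightarrow> nat"
  assumes periodic: "\<And>j. c (j + n) = c j" and bounded: "\<And>j. c j \<le> 8"
    and ineq: "\<And>j. 16 \<le> 8 * c (j + 2) + 4 * (c (j + 1) + c (j + 3)) + c j + c (j + 4)"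
  shows "n \<le> (\<Sum>j<n. c j)"
proof -
  define p where "p j = window_potential (c j) (c (j + 1)) (c (j + 2)) (c (j + 3))" for j
  have p_periodic: "p (j + n) = p j" for j
    using periodic[of j] periodic[of "j + 1"] periodic[of "j + 2"] periodic[of "j + 3"]
    by (simp add: p_def ac_simps)
  have step: "p j + 1 \<le> c (j + 4) + p (j + 1)" for j
    using window_potential_step[OF bounded bounded bounded bounded bounded ineq[of j]]
    by (simp add: p_def ac_simps eval_nat_numeral)
  have "(\<Sum>j<n. p j) + n = (\<Sum>j<n. p j + 1)"
    by (simp only: sum.distrib) simp
  also have "\<dots> \<le> (\<Sum>j<n. c (j + 4) + p (j + 1))"
    by (intro sum_mono step)
  also have "\<dots> = (\<Sum>j<n. c j) + (\<Sum>j<n. p j)"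
    by (simp only: sum.distrib sum_periodic_shift[of c, OF periodic]
        sum_periodic_shift[of p, OF p_periodic])
  finally show ?thesis
    by simp
qed

lemma torus8_card_ge:
  assumes dom: "disj_dom_set (torus_adj 8 n) (torus_V 8 n) S" and "5 \<le> n"
  shows "n \<le> card S"
proof -
  define c where "c j = column_count S 8 (j mod n)" for j
  have ineq: "16 \<le> 8 * c (j + 2) + 4 * (c (j + 1) + c (j + 3)) + c j + c (j + 4)" for j
    using torus_column_ineq[OF dom _ \<open>5 \<le> n\<close>, of "(j + 2) mod n"] \<open>5 \<le> n\<close>
    unfolding c_def using cyc_window_indices[of n j] by simp
  have "n \<le> (\<Sum>j<n. c j)"
    by (rule sum_ge_period_if_column_ineq[OF _ _ ineq]) (simp_all add: c_def column_count_le)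
  also have "\<dots> = card S"
    using dom card_eq_sum_column_count[of S 8 n] unfolding c_def disj_dom_set_def by simp
  finally show ?thesis .
qed

section \<open>The upper bound\<close>

definition column_set :: "nat \<Rightarrow> nat list list \<Rightarrow> (nat \<times> nat) set" where
  "column_set m cols = set [(i, j). j \<leftarrow> [0..<length cols], i \<leftarrow> cols ! j, i < m]"

lemma mem_column_set: "(i, j) \<in> column_set m cols \<longleftrightarrow> i < m \<and> j < length cols \<and> i \<in> set (cols ! j)"
  by (auto simp: column_set_def)

lemma column_set_subset: "column_set m cols \<subseteq> torus_V m (length cols)"
  by (auto simp: column_set_def torus_V_def)

lemma card_column_set_le: "card (column_set m cols) \<le> (\<Sum>col\<leftarrow>cols. length col)"
proof -
  let ?all = "concat (map (\<lambda>j. map (\<lambda>i. (i, j)) (cols ! j)) [0..<length cols])"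
  have "map (\<lambda>j. length (cols ! j)) [0..<length cols] = map length cols"
    by (rule nth_equalityI) simp_all
  then have length_all: "length ?all = (\<Sum>col\<leftarrow>cols. length col)"
    by (simp add: length_concat comp_def)
  have "card (column_set m cols) \<le> card (set ?all)"
    by (intro card_mono) (auto simp: column_set_def)
  also have "\<dots> \<le> length ?all"
    by (rule card_length)
  finally show ?thesis
    unfolding length_all .
qed

definition cyclic_window :: "'a list \<Rightarrow> nat \<Rightarrow> 'a list" where
  "cyclic_window xs s = map (\<lambda>k. xs ! ((s + k) mod length xs)) [0..<5]"

(* A window of five consecutive columns is read as a vertex set of C_m x C_5: the neighbour lists
   of its middle column do not wrap around, so they agree with those in any longer torus. *)

definition middle_dominated :: "nat \<Rightarrow> nat list list \<Rightarrow> bool" where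
  "middle_dominated m W \<longleftrightarrow> (\<forall>i<m. (i, 2) \<notin> column_set m W \<longrightarrow>
     1 \<le> hits (column_set m W) (torus_nbrs m 5 (i, 2)) \<or>
     2 \<le> hits (column_set m W) (torus_nbrs2 m 5 (i, 2)))"

lemma hits_map: "hits S (map f xs) = hits (f -` S) xs"
  by (simp add: hits_def comp_def)

lemma hits_cong: "(\<And>x. x \<in> set xs \<Longrightarrow> x \<in> S \<longleftrightarrow> x \<in> T) \<Longrightarrow> hits S xs = hits T xs"
  unfolding hits_def by (rule arg_cong[where f = sum_list], rule map_cong) auto

lemma mem_column_set_window:
  "cols \<noteq> [] \<Longrightarrow> k < 5 \<Longrightarrow>
    (x, k) \<in> column_set m (cyclic_window cols s) \<longleftrightarrow> (x, (s + k) mod length cols) \<in> column_set m cols"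
  by (simp add: mem_column_set cyclic_window_def)

lemma torus_nbrs_window:
  assumes "0 < n"
  shows "torus_nbrs m n (i, (s + 2) mod n) = map (apsnd (\<lambda>k. (s + k) mod n)) (torus_nbrs m 5 (i, 2))"
    "torus_nbrs2 m n (i, (s + 2) mod n) = map (apsnd (\<lambda>k. (s + k) mod n)) (torus_nbrs2 m 5 (i, 2))"
proof -
  note cyc_window_indices[OF assms]
  moreover have "cyc_succ 5 2 = 3" "cyc_succ 5 3 = 4" "cyc_pred 5 2 = 1" "cyc_pred 5 1 = 0"
    by (simp_all add: cyc_succ_def cyc_pred_def)
  ultimately show "torus_nbrs m n (i, (s + 2) mod n) = map (apsnd (\<lambda>k. (s + k) mod n)) (torus_nbrs m 5 (i, 2))"
    "torus_nbrs2 m n (i, (s + 2) mod n) = map (apsnd (\<lambda>k. (s + k) mod n)) (torus_nbrs2 m 5 (i, 2))"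
    by simp_all
qed

lemma hits_column_set_window:
  assumes "cols \<noteq> []" "set xs \<subseteq> UNIV \<times> {..<5}"
  shows "hits (column_set m cols) (map (apsnd (\<lambda>k. (s + k) mod length cols)) xs)
    = hits (column_set m (cyclic_window cols s)) xs"
  unfolding hits_map using assms by (intro hits_cong) (auto simp: mem_column_set_window)

lemma column_set_disj_dom:
  assumes "5 \<le> m" "5 \<le> length cols"
    and windows: "\<And>s. s < length cols \<Longrightarrow> middle_dominated m (cyclic_window cols s)"
  shows "disj_dom_set (torus_adj m (length cols)) (torus_V m (length cols)) (column_set m cols)"
  unfolding disj_dom_set_torus_iff[OF assms(1,2)]
proof (intro conjI column_set_subset ballI)
  fix v assume v: "v \<in> torus_V m (length cols) - column_set m cols"
  define n where "n = length cols"
  obtain i j where [simp]: "v = (i, j)" and "i < m" "j < n"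
    using v by (auto simp: torus_V_def n_def)
  define s where "s = (j + n - 2) mod n"
  have "cols \<noteq> []"
    using assms(2) by auto
  have "j + n - 2 + 2 = j + n"
    using assms(2) by (simp add: n_def)
  then have j: "(s + 2) mod n = j"
    unfolding s_def mod_add_left_eq using \<open>j < n\<close> by simp
  let ?W = "cyclic_window cols s"
  have "(i, 2) \<notin> column_set m ?W"
    using v mem_column_set_window[OF \<open>cols \<noteq> []\<close>, of 2 i m s] j by (simp add: n_def)
  then have "1 \<le> hits (column_set m ?W) (torus_nbrs m 5 (i, 2)) \<or>
      2 \<le> hits (column_set m ?W) (torus_nbrs2 m 5 (i, 2))"
    using windows[of s] \<open>i < m\<close> \<open>cols \<noteq> []\<close>
    unfolding middle_dominated_def s_def n_def by simp
  moreover have "set (torus_nbrs m 5 (i, 2)) \<subseteq> UNIV \<times> {..<5}"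
    "set (torus_nbrs2 m 5 (i, 2)) \<subseteq> UNIV \<times> {..<5}"
    by (auto simp: cyc_succ_def cyc_pred_def)
  ultimately show "1 \<le> hits (column_set m cols) (torus_nbrs m (length cols) v) \<or>
      2 \<le> hits (column_set m cols) (torus_nbrs2 m (length cols) v)"
    using \<open>cols \<noteq> []\<close> torus_nbrs_window[of n m i s] j
    by (simp del: torus_nbrs.simps torus_nbrs2.simps add: n_def hits_column_set_window)
qed

lemma nth_concat_replicate:
  "i < q * length xs \<Longrightarrow> concat (replicate q xs) ! i = xs ! (i mod length xs)"
proof (induction q arbitrary: i)
  case (Suc q)
  show ?case
  proof (cases "i < length xs")
    case False
    then have "concat (replicate q xs) ! (i - length xs) = xs ! ((i - length xs) mod length xs)"
      using Suc by (intro Suc.IH) auto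
    with False show ?thesis
      by (simp add: nth_append le_mod_geq)
  qed (simp add: nth_append)
qed simp

lemma sum_list_concat_replicate:
  fixes f :: "'a \<Rightarrow> nat"
  shows "(\<Sum>x\<leftarrow>concat (replicate q xs). f x) = q * (\<Sum>x\<leftarrow>xs. f x)"
  by (induction q) auto

definition periodic_column :: "'a list \<Rightarrow> 'a list \<Rightarrow> nat \<Rightarrow> 'a" where
  "periodic_column B P i = (if i < length B then B ! i else P ! ((i - length B) mod length P))"

lemma nth_append_concat_replicate:
  "i < length B + r * length P \<Longrightarrow> (B @ concat (replicate r P)) ! i = periodic_column B P i"
  using nth_concat_replicate[of "i - length B" r P] by (auto simp: periodic_column_def nth_append)

lemma cyclic_window_append_concat_replicate:
  assumes "0 < length B + r * length P"
  shows "cyclic_window (B @ concat (replicate r P)) t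
    = map (\<lambda>k. periodic_column B P ((t + k) mod (length B + r * length P))) [0..<5]"
proof -
  have "length (B @ concat (replicate r P)) = length B + r * length P"
    by (simp add: length_concat sum_list_replicate)
  then show ?thesis
    using assms unfolding cyclic_window_def by (auto intro!: nth_append_concat_replicate)
qed

lemma periodic_column_add_period:
  assumes "length B \<le> i"
  shows "periodic_column B P (i + r * length P) = periodic_column B P i"
proof -
  have eq: "i + r * length P - length B = (i - length B) + r * length P"
    using assms by simp
  show ?thesis
    unfolding periodic_column_def eq mod_mult_self1 using assms by simp
qed

lemma periodic_column_window_shift:
  fixes B P :: "'a list" and q t :: nat
  defines "n \<equiv> length B + q * length P" and "n\<^sub>0 \<equiv> length B + 2 * length P"
  assumes "4 \<le> length P" "2 \<le> q" "t < n"
  shows "\<exists>s'<n\<^sub>0. \<forall>k<5. periodic_column B P ((t + k) mod n) = periodic_column B P ((s' + k) mod n\<^sub>0)"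
proof -
  let ?f = "periodic_column B P"
  define w p where "w = length B" and "p = length P"
  define d where "d = (q - 2) * p"
  have "4 \<le> p" "n = n\<^sub>0 + d" "n\<^sub>0 = w + 2 * p"
    using assms by (simp_all add: n_def n\<^sub>0_def w_def p_def d_def algebra_simps)
  consider "t < w + p" | "w + p \<le> t" "t + 4 < n" | "n \<le> t + 4"
    by linarith
  then show ?thesis
  proof cases
    case 1
    then show ?thesis
      using \<open>4 \<le> p\<close> \<open>n = n\<^sub>0 + d\<close> \<open>n\<^sub>0 = w + 2 * p\<close> by (intro exI[of _ t]) simp
  next
    case 2
    define s' where "s' = w + (t - w) mod p"
    have "t = s' + (t - w) div p * p"
      using 2 by (simp add: s'_def)
    have "s' < w + p"
      using \<open>4 \<le> p\<close> by (simp add: s'_def)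
    show ?thesis
    proof (intro exI[of _ s'] conjI allI impI)
      fix k :: nat assume "k < 5"
      then have "?f ((t + k) mod n) = ?f (s' + k + (t - w) div p * p)"
        using 2 \<open>t = _\<close> by (simp add: ac_simps)
      also have "\<dots> = ?f (s' + k)"
        unfolding p_def by (rule periodic_column_add_period) (simp add: s'_def w_def)
      also have "\<dots> = ?f ((s' + k) mod n\<^sub>0)"
        using \<open>k < 5\<close> \<open>s' < w + p\<close> \<open>4 \<le> p\<close> \<open>n\<^sub>0 = w + 2 * p\<close> by simp
      finally show "?f ((t + k) mod n) = ?f ((s' + k) mod n\<^sub>0)" .
    qed (use \<open>s' < w + p\<close> \<open>n\<^sub>0 = w + 2 * p\<close> in simp)
  next
    case 3
    have "d + w \<le> t"
      using 3 \<open>4 \<le> p\<close> \<open>n = n\<^sub>0 + d\<close> \<open>n\<^sub>0 = w + 2 * p\<close> by simp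
    show ?thesis
    proof (intro exI[of _ "t - d"] conjI allI impI)
      show "t - d < n\<^sub>0"
        using \<open>t < n\<close> \<open>n = n\<^sub>0 + d\<close> \<open>d + w \<le> t\<close> by simp
    next
      fix k :: nat assume "k < 5"
      show "?f ((t + k) mod n) = ?f ((t - d + k) mod n\<^sub>0)"
      proof (cases "t + k < n")
        case True
        then have "?f ((t + k) mod n) = ?f (t - d + k + (q - 2) * length P)"
          using \<open>d + w \<le> t\<close> by (simp add: d_def p_def)
        also have "\<dots> = ?f (t - d + k)"
          by (rule periodic_column_add_period) (use \<open>d + w \<le> t\<close> in \<open>simp add: w_def\<close>)
        also have "\<dots> = ?f ((t - d + k) mod n\<^sub>0)"
          using True \<open>d + w \<le> t\<close> \<open>n = n\<^sub>0 + d\<close> by simp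
        finally show ?thesis .
      next
        case False
        then have "(t + k) mod n = t + k - n" "(t - d + k) mod n\<^sub>0 = t + k - n"
          using \<open>t < n\<close> \<open>k < 5\<close> \<open>4 \<le> p\<close> \<open>n = n\<^sub>0 + d\<close> \<open>n\<^sub>0 = w + 2 * p\<close> \<open>d + w \<le> t\<close>
          by (simp_all add: mod_if ac_simps)
        then show ?thesis
          by simp
      qed
    qed
  qed
qed

lemma cyclic_window_periodic_extension:
  fixes B P :: "'a list"
  assumes "4 \<le> length P" "2 \<le> q"
  shows "\<exists>s'<length B + 2 * length P.
    cyclic_window (B @ concat (replicate q P)) s = cyclic_window (B @ P @ P) s'"
proof -
  let ?n = "length B + q * length P"
  have "P \<noteq> []"
    using assms(1) by auto
  then have "0 < ?n"
    using assms(2) by simp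
  then obtain s' where "s' < length B + 2 * length P"
    and "\<forall>k<5. periodic_column B P ((s mod ?n + k) mod ?n)
      = periodic_column B P ((s' + k) mod (length B + 2 * length P))"
    using periodic_column_window_shift[OF assms, of "s mod ?n" B] by auto
  moreover have "cyclic_window (B @ P @ P) s'
    = map (\<lambda>k. periodic_column B P ((s' + k) mod (length B + 2 * length P))) [0..<5]"
    using cyclic_window_append_concat_replicate[of B 2 P s'] \<open>P \<noteq> []\<close> by (simp add: numeral_2_eq_2)
  ultimately show ?thesis
    using cyclic_window_append_concat_replicate[OF \<open>0 < ?n\<close>, of s]
    by (auto simp: mod_add_left_eq)
qed

definition torus8_period :: "nat list list" where
  "torus8_period = [[0, 4], [], [2, 6], []]"

definition torus8_block :: "nat \<Rightarrow> nat list list" where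
  "torus8_block r = [[], [[0, 4]], [[0, 3], [4, 5]], [[0, 4], [], [2, 6]]] ! r"

lemma torus8_block_windows:
  "\<forall>r\<in>set [0..<4]. \<forall>s\<in>set [0..<length (torus8_block r) + 2 * length torus8_period].
     middle_dominated 8 (cyclic_window (torus8_block r @ torus8_period @ torus8_period) s)"
  unfolding torus8_block_def torus8_period_def by code_simp

lemma torus8_disj_dom_upper:
  assumes "8 \<le> n"
  obtains S where "disj_dom_set (torus_adj 8 n) (torus_V 8 n) S"
    and "card S \<le> n - n mod 4 + (\<Sum>col\<leftarrow>torus8_block (n mod 4). length col)"
proof -
  define cols where "cols = torus8_block (n mod 4) @ concat (replicate (n div 4) torus8_period)"
  have "length (torus8_block r) = r" if "r < 4" for r
    using that by (auto simp: torus8_block_def less_Suc_eq numeral_eq_Suc)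
  moreover have period_len: "length torus8_period = 4"
    by (simp add: torus8_period_def)
  ultimately have len: "length cols = n"
    by (simp add: cols_def length_concat sum_list_replicate mod_div_mult_eq)
  have "middle_dominated 8 (cyclic_window cols s)" for s
  proof -
    obtain s' where "s' < length (torus8_block (n mod 4)) + 2 * length torus8_period"
      and "cyclic_window cols s = cyclic_window (torus8_block (n mod 4) @ torus8_period @ torus8_period) s'"
      using cyclic_window_periodic_extension[of torus8_period "n div 4" "torus8_block (n mod 4)" s]
        period_len div_le_mono[OF assms, of 4]
      by (auto simp: cols_def)
    then show ?thesis
      using torus8_block_windows by simp
  qed
  then have "disj_dom_set (torus_adj 8 n) (torus_V 8 n) (column_set 8 cols)"
    using column_set_disj_dom[of 8 cols] assms len by simp
  moreover have "card (column_set 8 cols) \<le> n - n mod 4 + (\<Sum>col\<leftarrow>torus8_block (n mod 4). length col)"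
    using card_column_set_le[of 8 cols]
    by (simp add: cols_def sum_list_concat_replicate torus8_period_def minus_mod_eq_mult_div)
  ultimately show ?thesis
    by (rule that)
qed

theorem theorem4:
  fixes n :: nat
  assumes "n \<ge> 8"
  shows "n \<le> disj_dom_num (torus_adj 8 n) (torus_V 8 n)
       \<and> ((n mod 4 = 1 \<or> n mod 4 = 3) \<longrightarrow> disj_dom_num (torus_adj 8 n) (torus_V 8 n) \<le> n + 1)
       \<and> (n mod 4 = 2 \<longrightarrow> disj_dom_num (torus_adj 8 n) (torus_V 8 n) \<le> n + 2)
       \<and> (n mod 4 = 0 \<longrightarrow> disj_dom_num (torus_adj 8 n) (torus_V 8 n) = n)"
proof -
  let ?D = "disj_dom_num (torus_adj 8 n) (torus_V 8 n)"
  obtain S where S: "disj_dom_set (torus_adj 8 n) (torus_V 8 n) S"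
    and card_S: "card S \<le> n - n mod 4 + (\<Sum>col\<leftarrow>torus8_block (n mod 4). length col)"
    using torus8_disj_dom_upper[OF assms] by blast
  have lower: "n \<le> ?D"
    using S torus8_card_ge assms by (intro disj_dom_num_ge) auto
  have upper: "?D \<le> n - n mod 4 + (\<Sum>col\<leftarrow>torus8_block (n mod 4). length col)"
    using disj_dom_num_le[OF S] card_S by linarith
  have block_cost: "(\<Sum>col\<leftarrow>torus8_block r. length col) = [0, 2, 4, 4] ! r" if "r < 4" for r
    using that by (auto simp: torus8_block_def less_Suc_eq numeral_eq_Suc)
  show ?thesis
    using lower upper block_cost[of "n mod 4"] by auto
qed

end
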